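(* Let $n\ge1$, let $\{e_1,\dots,e_n\}$ be a basis of a real vector space $X$, let $V=\{0,e_1,\dots,e_n\}$ and let $T=(V,E,0)$ be a tree on $V$ rooted at $0$. Suppose that $a,b\in\mathbb R^n$ and $c\in(\mathbb R\setminus\{0\})^n$ satisfy \[\sum_{i=1}^na_ie_i=\sum_{i=1}^nb_i\frac{e_i-\mathrm{pred}_T(e_i)}{c_i}.\] Then $b_i=c_i\sum_{\{j:\,e_j\in V_{e_i}^T\}}a_j$ for every $i=1,\dots,n$.
   Context: For a tree $T$ on a finite vertex set rooted at $0$ and a vertex $v\ne0$, $\mathrm{pred}_T(v)$ is the neighbour of $v$ on the unique path from $v$ to $0$ (here vertices are vectors, $0$ the zero vector), and $V_v^T$ is the vertex set of the subtree rooted at $v$, i.e. $v$ together with all vertices whose path to $0$ passes through $v$. *)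

theory Defs
  imports "HOL-Analysis.Analysis"
begin

definition is_upath :: "'a set set \<Rightarrow> 'a list \<Rightarrow> bool" where
  "is_upath E xs \<longleftrightarrow> xs \<noteq> [] \<and> distinct xs \<and>
     (\<forall>i. Suc i < length xs \<longrightarrow> {xs ! i, xs ! Suc i} \<in> E)"

definition is_tree :: "'a set \<Rightarrow> 'a set set \<Rightarrow> bool" where
  "is_tree V E \<longleftrightarrow> finite V \<and>
     E \<subseteq> {{u, v} | u v. u \<in> V \<and> v \<in> V \<and> u \<noteq> v} \<and>
     (\<forall>u\<in>V. \<forall>v\<in>V. \<exists>!xs. is_upath E xs \<and> hd xs = u \<and> last xs = v)"

definition tree_path :: "'a set set \<Rightarrow> 'a \<Rightarrow> 'a \<Rightarrow> 'a list" where
  "tree_path E u v = (THE xs. is_upath E xs \<and> hd xs = u \<and> last xs = v)"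

definition tree_pred :: "'a set set \<Rightarrow> 'a::zero \<Rightarrow> 'a" where
  "tree_pred E v = tree_path E v 0 ! 1"

definition subtree_verts :: "'a set \<Rightarrow> 'a set set \<Rightarrow> 'a::zero \<Rightarrow> 'a set" where
  "subtree_verts V E v = {w \<in> V. v \<in> set (tree_path E w 0)}"

end

theory Submission
  imports Defs
begin

(* With d_i = b_i / c_i the hypothesis reads sum_i a_i e_i = sum_l d_l (e_l - pred e_l).
   Since pred e_l is 0 or a basis vector, comparing coefficients gives
   a_k = d_k - (sum of d_l over the children e_l of e_k).  Summing this over the
   subtree of e_i, every vertex of the subtree other than e_i is the child of exactly
   one vertex of the subtree, so everything cancels except d_i. *)

lemma is_upath_ConsD:
  assumes "is_upath E (x # ys)" and "ys \<noteq> []"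
  shows "is_upath E ys" and "{x, hd ys} \<in> E" and "x \<notin> set ys"
proof -
  have edges: "\<And>i. Suc i < Suc (length ys) \<Longrightarrow> {(x # ys) ! i, (x # ys) ! Suc i} \<in> E"
    using assms(1) unfolding is_upath_def by simp
  show "is_upath E ys"
    unfolding is_upath_def
  proof (intro conjI allI impI)
    fix i assume "Suc i < length ys"
    then show "{ys ! i, ys ! Suc i} \<in> E" using edges[of "Suc i"] by simp
  qed (use assms in \<open>auto simp: is_upath_def\<close>)
  show "{x, hd ys} \<in> E" using edges[of 0] assms(2) by (simp add: hd_conv_nth)
  show "x \<notin> set ys" using assms(1) unfolding is_upath_def by simp
qed

lemma tree_path_spec:
  assumes "is_tree V E" "u \<in> V" "v \<in> V"
  shows "is_upath E (tree_path E u v) \<and> hd (tree_path E u v) = u \<and> last (tree_path E u v) = v"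
  unfolding tree_path_def
  by (rule theI') (use assms in \<open>auto simp: is_tree_def\<close>)

lemma tree_path_unique:
  assumes "is_tree V E" "u \<in> V" "v \<in> V" "is_upath E xs" "hd xs = u" "last xs = v"
  shows "tree_path E u v = xs"
  unfolding tree_path_def
  by (rule the1_equality) (use assms in \<open>auto simp: is_tree_def\<close>)

lemma tree_edge_endpoints:
  assumes "is_tree V E" "{x, y} \<in> E"
  shows "x \<in> V" and "y \<in> V"
proof -
  from assms obtain u v where "{x, y} = {u, v}" "u \<in> V" "v \<in> V"
    unfolding is_tree_def by blast
  then show "x \<in> V" "y \<in> V" by (auto simp: doubleton_eq_iff)
qed

lemma tree_path_self:
  assumes "is_tree V E" "v \<in> V"
  shows "tree_path E v v = [v]"
  by (rule tree_path_unique[OF assms assms(2)]) (auto simp: is_upath_def)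

lemma tree_path_to_root_Cons:
  assumes T: "is_tree V E" and "w \<in> V" and root: "(0::'a::zero) \<in> V" and "w \<noteq> 0"
  shows "tree_path E w 0 = w # tree_path E (tree_pred E w) 0" and "tree_pred E w \<in> V"
proof -
  obtain ys where path: "tree_path E w 0 = w # ys" and upath: "is_upath E (w # ys)"
    and last_ys: "last (w # ys) = 0"
    using tree_path_spec[OF T \<open>w \<in> V\<close> root]
    by (metis is_upath_def list.collapse)
  have "ys \<noteq> []" using last_ys \<open>w \<noteq> 0\<close> by auto
  have pred: "tree_pred E w = hd ys"
    using \<open>ys \<noteq> []\<close> unfolding tree_pred_def path by (simp add: hd_conv_nth)
  show "tree_pred E w \<in> V"
    unfolding pred using tree_edge_endpoints(2)[OF T is_upath_ConsD(2)[OF upath \<open>ys \<noteq> []\<close>]] .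
  have "tree_path E (tree_pred E w) 0 = ys"
    using \<open>tree_pred E w \<in> V\<close> is_upath_ConsD(1)[OF upath \<open>ys \<noteq> []\<close>] last_ys \<open>ys \<noteq> []\<close>
    by (intro tree_path_unique[OF T _ root]) (auto simp: pred)
  then show "tree_path E w 0 = w # tree_path E (tree_pred E w) 0" using path by simp
qed

lemma root_notin_subtree_verts:
  assumes "is_tree V E" "0 \<in> V" "v \<noteq> 0"
  shows "0 \<notin> subtree_verts V E v"
  using tree_path_self[OF assms(1,2)] assms(3) by (simp add: subtree_verts_def)

lemma self_in_subtree_verts:
  assumes "is_tree V E" "v \<in> V" "0 \<in> V"
  shows "v \<in> subtree_verts V E v"
  using tree_path_spec[OF assms] assms(2) unfolding subtree_verts_def is_upath_def
  by (metis (mono_tags, lifting) hd_in_set mem_Collect_eq)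

lemma tree_pred_in_subtree_verts_iff:
  assumes T: "is_tree V E" and root: "0 \<in> V" and "u \<in> V" "u \<noteq> 0"
  shows "tree_pred E u \<in> subtree_verts V E v \<longleftrightarrow> u \<in> subtree_verts V E v \<and> u \<noteq> v"
proof -
  note path = tree_path_to_root_Cons[OF T \<open>u \<in> V\<close> root \<open>u \<noteq> 0\<close>]
  have "u \<notin> set (tree_path E (tree_pred E u) 0)"
    using tree_path_spec[OF T \<open>u \<in> V\<close> root] unfolding path(1) is_upath_def by simp
  then show ?thesis
    using path \<open>u \<in> V\<close> unfolding subtree_verts_def by auto
qed

lemma sum_scaleR_indicator_image:
  fixes e :: "'i \<Rightarrow> 'a::real_vector"
  assumes "finite I" "inj_on e I" "x \<in> insert 0 (e ` I)"
  shows "(\<Sum>k\<in>I. (if x = e k then r else 0) *\<^sub>R e k) = r *\<^sub>R x"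
proof (cases "x = 0")
  case True
  then show ?thesis by (auto intro!: sum.neutral)
next
  case False
  then obtain j where "j \<in> I" "x = e j" using assms(3) by auto
  then have "(\<Sum>k\<in>I. (if x = e k then r else 0) *\<^sub>R e k) = (\<Sum>k\<in>I. if k = j then r *\<^sub>R e j else 0)"
    using assms(2) by (intro sum.cong) (auto simp: inj_on_eq_iff)
  then show ?thesis using \<open>j \<in> I\<close> \<open>x = e j\<close> assms(1) by simp
qed

lemma independent_image_coefficients_eq:
  fixes e :: "'i \<Rightarrow> 'a::real_vector"
  assumes "finite I" "inj_on e I" "independent (e ` I)"
    and "(\<Sum>k\<in>I. f k *\<^sub>R e k) = (\<Sum>k\<in>I. g k *\<^sub>R e k)" and "k \<in> I"
  shows "f k = g k"
proof -
  define u where "u v = f (inv_into I e v) - g (inv_into I e v)" for v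
  have "(\<Sum>v\<in>e ` I. u v *\<^sub>R v) = (\<Sum>k\<in>I. (f k - g k) *\<^sub>R e k)"
    using assms(2) by (simp add: sum.reindex u_def)
  also have "\<dots> = 0"
    using assms(4) by (simp add: scaleR_diff_left sum_subtractf)
  finally have "u (e k) = 0"
    using independentD[OF assms(3)] assms(1,5) by blast
  then show ?thesis using assms(2,5) by (simp add: u_def)
qed

lemma coefficients_of_difference_combination:
  fixes e P :: "'i \<Rightarrow> 'a::real_vector"
  assumes fin: "finite I" and inj: "inj_on e I" and indep: "independent (e ` I)"
    and P: "\<And>l. l \<in> I \<Longrightarrow> P l \<in> insert 0 (e ` I)"
    and eq: "(\<Sum>k\<in>I. a k *\<^sub>R e k) = (\<Sum>l\<in>I. d l *\<^sub>R (e l - P l))"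
    and "k \<in> I"
  shows "a k = d k - sum d {l\<in>I. P l = e k}"
proof -
  have "(\<Sum>l\<in>I. d l *\<^sub>R P l) = (\<Sum>l\<in>I. \<Sum>k\<in>I. (if P l = e k then d l else 0) *\<^sub>R e k)"
    using sum_scaleR_indicator_image[OF fin inj P] by simp
  also have "\<dots> = (\<Sum>k\<in>I. (\<Sum>l\<in>I. if P l = e k then d l else 0) *\<^sub>R e k)"
    by (subst sum.swap) (simp add: scaleR_sum_left)
  also have "\<dots> = (\<Sum>k\<in>I. sum d {l\<in>I. P l = e k} *\<^sub>R e k)"
    using fin by (simp add: sum.inter_filter)
  finally have "(\<Sum>k\<in>I. a k *\<^sub>R e k) = (\<Sum>k\<in>I. (d k - sum d {l\<in>I. P l = e k}) *\<^sub>R e k)"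
    using eq by (simp add: scaleR_diff_right scaleR_diff_left sum_subtractf)
  then show ?thesis
    by (rule independent_image_coefficients_eq[OF fin inj indep _ \<open>k \<in> I\<close>])
qed

lemma sum_telescopes_over_subtree:
  fixes a d :: "'i \<Rightarrow> 'b::ab_group_add"
  assumes "finite I" "S \<subseteq> I" "i \<in> S" "inj_on e I"
    and children: "{l\<in>I. q l \<in> e ` S} = S - {i}"
    and a: "\<And>k. k \<in> S \<Longrightarrow> a k = d k - sum d {l\<in>I. q l = e k}"
  shows "sum a S = d i"
proof -
  have fin_S: "finite S" using assms(1,2) by (rule finite_subset[rotated])
  have "(\<Sum>k\<in>S. sum d {l\<in>I. q l = e k}) = (\<Sum>y\<in>e ` S. sum d {l\<in>I. q l = y})"
    using inj_on_subset[OF assms(4,2)] by (simp add: sum.reindex)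
  also have "\<dots> = (\<Sum>y\<in>e ` S. sum d {l\<in>{l\<in>I. q l \<in> e ` S}. q l = y})"
    by (intro sum.cong) auto
  also have "\<dots> = sum d {l\<in>I. q l \<in> e ` S}"
    using assms(1) fin_S by (intro sum.group) auto
  finally have children_sum: "(\<Sum>k\<in>S. sum d {l\<in>I. q l = e k}) = sum d (S - {i})"
    unfolding children .
  have "sum a S = sum d S - (\<Sum>k\<in>S. sum d {l\<in>I. q l = e k})"
    using a by (simp add: sum_subtractf)
  also have "\<dots> = d i"
    unfolding children_sum using fin_S assms(3) by (simp add: sum.remove)
  finally show ?thesis .
qed

lemma tree_pred_preimage_subtree_verts:
  fixes e :: "'i \<Rightarrow> 'a::zero"
  assumes T: "is_tree (insert 0 (e ` I)) E" and inj: "inj_on e I" and nonzero: "0 \<notin> e ` I"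
    and "i \<in> I"
  shows "{l\<in>I. tree_pred E (e l) \<in> e ` {j\<in>I. e j \<in> subtree_verts (insert 0 (e ` I)) E (e i)}}
       = {j\<in>I. e j \<in> subtree_verts (insert 0 (e ` I)) E (e i)} - {i}"
proof -
  let ?V = "insert 0 (e ` I)"
  have "tree_pred E (e l) \<in> e ` {j\<in>I. e j \<in> subtree_verts ?V E (e i)}
      \<longleftrightarrow> e l \<in> subtree_verts ?V E (e i) \<and> l \<noteq> i" if "l \<in> I" for l
  proof -
    have "e l \<noteq> 0" "e i \<noteq> 0" using nonzero that \<open>i \<in> I\<close> by force+
    have "tree_pred E (e l) \<in> ?V"
      using tree_path_to_root_Cons(2)[OF T _ _ \<open>e l \<noteq> 0\<close>] that by simp
    moreover have "0 \<notin> subtree_verts ?V E (e i)"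
      using root_notin_subtree_verts[OF T _ \<open>e i \<noteq> 0\<close>] by simp
    ultimately have "tree_pred E (e l) \<in> e ` {j\<in>I. e j \<in> subtree_verts ?V E (e i)}
        \<longleftrightarrow> tree_pred E (e l) \<in> subtree_verts ?V E (e i)"
      by auto
    also have "\<dots> \<longleftrightarrow> e l \<in> subtree_verts ?V E (e i) \<and> e l \<noteq> e i"
      using tree_pred_in_subtree_verts_iff[OF T _ _ \<open>e l \<noteq> 0\<close>] that by simp
    finally show ?thesis
      using inj that \<open>i \<in> I\<close> by (auto simp: inj_on_eq_iff)
  qed
  then show ?thesis by auto
qed

theorem lemma2p6:
  fixes n :: nat and e :: "nat \<Rightarrow> 'a::real_vector" and E :: "'a set set"
    and a b c :: "nat \<Rightarrow> real"
  assumes "n \<ge> 1"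
    and "inj_on e {1..n}"
    and "independent (e ` {1..n})"
    and "span (e ` {1..n}) = UNIV"
    and "is_tree (insert 0 (e ` {1..n})) E"
    and "\<forall>i\<in>{1..n}. c i \<noteq> 0"
    and "(\<Sum>i=1..n. a i *\<^sub>R e i) = (\<Sum>i=1..n. b i *\<^sub>R ((1 / c i) *\<^sub>R (e i - tree_pred E (e i))))"
  shows "\<forall>i\<in>{1..n}. b i = c i * (\<Sum>j\<in>{j\<in>{1..n}. e j \<in> subtree_verts (insert 0 (e ` {1..n})) E (e i)}. a j)"
proof
  fix i assume i: "i \<in> {1..n}"
  let ?V = "insert 0 (e ` {1..n})"
  let ?S = "{j\<in>{1..n}. e j \<in> subtree_verts ?V E (e i)}"
  define d where "d l = b l / c l" for l
  have nonzero: "0 \<notin> e ` {1..n}"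
    using assms(3) dependent_zero by blast
  have pred: "tree_pred E (e l) \<in> ?V" if "l \<in> {1..n}" for l
    using tree_path_to_root_Cons(2)[OF assms(5)] nonzero that by force
  have "(\<Sum>k\<in>{1..n}. a k *\<^sub>R e k) = (\<Sum>l\<in>{1..n}. d l *\<^sub>R (e l - tree_pred E (e l)))"
    using assms(7) by (simp add: d_def)
  then have coefficients: "a k = d k - sum d {l\<in>{1..n}. tree_pred E (e l) = e k}"
    if "k \<in> {1..n}" for k
    using coefficients_of_difference_combination[OF _ assms(2,3) pred] that by simp
  have "i \<in> ?S"
    using self_in_subtree_verts[OF assms(5)] i by simp
  have "sum a ?S = d i"
    by (rule sum_telescopes_over_subtree[OF _ _ \<open>i \<in> ?S\<close> assms(2)
          tree_pred_preimage_subtree_verts[OF assms(5,2) nonzero i]])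
      (auto simp: coefficients)
  then show "b i = c i * sum a ?S"
    using assms(6) i by (simp add: d_def)
qed

end
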